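(* Let $\mathbb{G}$ be a $\sigma$-compact, second countable locally compact Abelian group, let $\mathsf{\Lambda}\subseteq\mathbb{G}$ be a Meyer set, and let $d$ be a metric compatible with the topology of the hull $X_{\mathsf{\Lambda}}$. For $\varepsilon>0$ let $P_\varepsilon=\{t\in\mathbb{G}: d(t.\mathsf{\Lambda},\mathsf{\Lambda})<\varepsilon\}$, and for compact $K\subseteq\mathbb{G}$ let $\mathsf{\Lambda}_K=\{t\in\mathbb{G}:(\mathsf{\Lambda}-t)\cap K=\mathsf{\Lambda}\cap K\}$. Then the following are equivalent: (1) each $\mathsf{\Lambda}_K$ is relatively dense in $\mathbb{G}$, and for every compact $K\subseteq\mathbb{G}$ there is a compact $K'\subseteq\mathbb{G}$ with $\mathsf{\Lambda}_{K'}-\mathsf{\Lambda}_{K'}\subseteq\mathsf{\Lambda}_K$; (2) each $P_\varepsilon$ is relatively dense in $\mathbb{G}$, and for each $\varepsilon>0$ there is $\delta>0$ with $P_\delta-P_\delta\subseteq P_\varepsilon$.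
   Context: A Meyer set of $\mathbb{G}$ is a subset $\Lambda\subseteq\mathbb{G}$ that is uniformly discrete and relatively dense and for which there is a finite set $F\subseteq\mathbb{G}$ with $\Lambda-\Lambda\subseteq\Lambda+F$. The hull is $X_{\mathsf{\Lambda}}=\{\Lambda\subseteq\mathbb{G}: \forall K\subseteq\mathbb{G}\text{ compact}\ \exists t\in\mathbb{G},\ \Lambda\cap K=(\mathsf{\Lambda}-t)\cap K\}$, equipped with the uniformity whose basis consists of the sets $\mathcal{U}_{K,U}=\{(\Lambda,\Lambda')\in X_{\mathsf{\Lambda}}^2:\exists t,t'\in U,\ (\Lambda-t)\cap K=(\Lambda'-t')\cap K\}$ for $K\subseteq\mathbb{G}$ compact and $U$ a neighborhood of $0$; this makes $X_{\mathsf{\Lambda}}$ a compact metrizable space, with $\mathbb{G}$-action $t.\Lambda=\Lambda-t$. *)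

theory Defs
  imports "HOL-Analysis.Analysis"
begin

definition set_sum :: "'g::ab_group_add set \<Rightarrow> 'g set \<Rightarrow> 'g set" where
  "set_sum A B = {a + b | a b. a \<in> A \<and> b \<in> B}"

definition set_diff_pts :: "'g::ab_group_add set \<Rightarrow> 'g set \<Rightarrow> 'g set" where
  "set_diff_pts A B = {a - b | a b. a \<in> A \<and> b \<in> B}"

text \<open>Translate: t.L = L - t\<close>
definition translate :: "'g::ab_group_add \<Rightarrow> 'g set \<Rightarrow> 'g set" where
  "translate t L = (\<lambda>x. x - t) ` L"

definition sigma_compact_group :: "'g::topological_space itself \<Rightarrow> bool" where
  "sigma_compact_group _ \<longleftrightarrow> (\<exists>C :: nat \<Rightarrow> 'g set. (\<forall>n. compact (C n)) \<and> (\<Union>n. C n) = UNIV)"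

definition relatively_dense :: "'g::{ab_group_add,topological_space} set \<Rightarrow> bool" where
  "relatively_dense A \<longleftrightarrow> (\<exists>K. compact K \<and> set_sum A K = UNIV)"

definition uniformly_discrete :: "'g::{ab_group_add,topological_space} set \<Rightarrow> bool" where
  "uniformly_discrete A \<longleftrightarrow> (\<exists>V. open V \<and> 0 \<in> V \<and> (\<forall>x\<in>A. \<forall>y\<in>A. y - x \<in> V \<longrightarrow> x = y))"

definition meyer_set :: "'g::{ab_group_add,topological_space} set \<Rightarrow> bool" where
  "meyer_set A \<longleftrightarrow> uniformly_discrete A \<and> relatively_dense A \<and>
     (\<exists>F. finite F \<and> set_diff_pts A A \<subseteq> set_sum A F)"

definition hull_of :: "'g::{ab_group_add,topological_space} set \<Rightarrow> 'g set set" where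
  "hull_of L0 = {L. \<forall>K. compact K \<longrightarrow> (\<exists>t. L \<inter> K = translate t L0 \<inter> K)}"

definition hull_entourage :: "'g::{ab_group_add,topological_space} set \<Rightarrow> 'g set \<Rightarrow> 'g set \<Rightarrow> ('g set \<times> 'g set) set" where
  "hull_entourage L0 K U = {(L, L'). L \<in> hull_of L0 \<and> L' \<in> hull_of L0 \<and>
      (\<exists>t\<in>U. \<exists>t'\<in>U. translate t L \<inter> K = translate t' L' \<inter> K)}"

text \<open>Open sets of the topology induced by the uniformity (U ranges over open
  neighbourhoods of 0, which form a neighbourhood base).\<close>
definition hull_open :: "'g::{ab_group_add,topological_space} set \<Rightarrow> 'g set set \<Rightarrow> bool" where
  "hull_open L0 W \<longleftrightarrow> W \<subseteq> hull_of L0 \<and>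
     (\<forall>L\<in>W. \<exists>K U. compact K \<and> open U \<and> 0 \<in> U \<and>
        {L'. (L, L') \<in> hull_entourage L0 K U} \<subseteq> W)"

definition P_set :: "('g set \<Rightarrow> 'g set \<Rightarrow> real) \<Rightarrow> 'g::ab_group_add set \<Rightarrow> real \<Rightarrow> 'g set" where
  "P_set d L0 \<epsilon> = {t. d (translate t L0) L0 < \<epsilon>}"

definition Lambda_K :: "'g::ab_group_add set \<Rightarrow> 'g set \<Rightarrow> 'g set" where
  "Lambda_K L0 K = {t. translate t L0 \<inter> K = L0 \<inter> K}"

end

theory Submission
  imports Defs
begin

(* The basic neighbourhood {Lambda'. (Lambda, Lambda') in U_{K,U}} of Lambda in the hull, pulled back
   along t |-> t.Lambda, is essentially Lambda_K - U: the shifts matching Lambda on the window K up to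
   an error in U.  As d induces the hull topology, every ball around Lambda contains such a set, so
   Lambda_K - U is contained in P_eps; conversely, G being locally compact, these sets are
   neighbourhoods, so P_eps is contained in Lambda_K + W for small eps.  Relative density and the
   difference conditions thus pass between the two families up to small errors in G, which from (1)
   to (2) are absorbed by U.  From (2) to (1) they are removed using that Lambda - Lambda is uniformly
   discrete (a consequence of the Meyer property): once a point of Lambda is added to the window, all
   shifts involved lie in Lambda - Lambda, and two of them differing by an element of a small W
   coincide. *)

lemma mem_translate: "x \<in> translate t L \<longleftrightarrow> x + t \<in> L"
  by (force simp: translate_def)

lemma translate_translate: "translate a (translate b L) = translate (b + a) L"
  by (auto simp: mem_translate ac_simps)

lemma translate_0 [simp]: "translate 0 L = L"
  by (auto simp: mem_translate)

lemma translate_Int_eq_iff: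
  "translate a L \<inter> K = translate b L' \<inter> K \<longleftrightarrow> (\<forall>y\<in>K. y + a \<in> L \<longleftrightarrow> y + b \<in> L')"
  by (auto simp: set_eq_iff mem_translate)

lemma translate_in_hull_of: "translate t L0 \<in> hull_of L0"
  by (auto simp: hull_of_def)

lemma self_in_hull_of: "L0 \<in> hull_of L0"
  using translate_in_hull_of[of 0 L0] by simp

lemma mem_set_sum: "x \<in> set_sum A B \<longleftrightarrow> (\<exists>a\<in>A. \<exists>b\<in>B. x = a + b)"
  by (auto simp: set_sum_def)

lemma mem_set_diff_pts: "x \<in> set_diff_pts A B \<longleftrightarrow> (\<exists>a\<in>A. \<exists>b\<in>B. x = a - b)"
  by (auto simp: set_diff_pts_def)

lemma set_sum_memI: "a \<in> A \<Longrightarrow> b \<in> B \<Longrightarrow> a + b \<in> set_sum A B"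
  by (auto simp: set_sum_def)

lemma set_diff_pts_memI: "a \<in> A \<Longrightarrow> b \<in> B \<Longrightarrow> a - b \<in> set_diff_pts A B"
  by (auto simp: set_diff_pts_def)

lemma set_sum_eq_image: "set_sum A B = (\<lambda>(a, b). a + b) ` (A \<times> B)"
  by (auto simp: set_sum_def)

lemma set_diff_pts_eq_image: "set_diff_pts A B = (\<lambda>(a, b). a - b) ` (A \<times> B)"
  by (auto simp: set_diff_pts_def)

lemma set_sum_empty [simp]: "set_sum {} B = {}"
  by (simp add: set_sum_def)

lemma set_sum_mono: "A \<subseteq> A' \<Longrightarrow> B \<subseteq> B' \<Longrightarrow> set_sum A B \<subseteq> set_sum A' B'"
  by (auto simp: set_sum_def)

lemma set_diff_pts_mono: "A \<subseteq> A' \<Longrightarrow> B \<subseteq> B' \<Longrightarrow> set_diff_pts A B \<subseteq> set_diff_pts A' B'"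
  by (auto simp: set_diff_pts_def)

lemma subset_set_diff_pts_zero: "0 \<in> U \<Longrightarrow> A \<subseteq> set_diff_pts A U"
  by (force simp: set_diff_pts_def)

lemma finite_set_sum: "finite A \<Longrightarrow> finite B \<Longrightarrow> finite (set_sum A B)"
  by (simp add: set_sum_eq_image)

lemma finite_set_diff_pts: "finite A \<Longrightarrow> finite B \<Longrightarrow> finite (set_diff_pts A B)"
  by (simp add: set_diff_pts_eq_image)

lemma compact_set_sum:
  fixes A B :: "'g::topological_ab_group_add set"
  shows "compact A \<Longrightarrow> compact B \<Longrightarrow> compact (set_sum A B)"
  unfolding set_sum_eq_image case_prod_unfold
  by (intro compact_continuous_image compact_Times continuous_intros)

lemma compact_set_diff_pts:
  fixes A B :: "'g::topological_ab_group_add set"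
  shows "compact A \<Longrightarrow> compact B \<Longrightarrow> compact (set_diff_pts A B)"
  unfolding set_diff_pts_eq_image case_prod_unfold
  by (intro compact_continuous_image compact_Times continuous_intros)

lemma relatively_dense_mono:
  assumes "relatively_dense A" "A \<subseteq> B"
  shows "relatively_dense B"
proof -
  obtain K where "compact K" "set_sum A K = UNIV"
    using assms(1) unfolding relatively_dense_def by blast
  moreover have "set_sum A K \<subseteq> set_sum B K"
    using assms(2) by (rule set_sum_mono) simp
  ultimately show ?thesis
    unfolding relatively_dense_def by auto
qed

lemma relatively_dense_if_subset_set_sum:
  fixes A B C :: "'g::topological_ab_group_add set"
  assumes "relatively_dense A" "A \<subseteq> set_sum B C" "compact C"
  shows "relatively_dense B"
proof -
  obtain K where K: "compact K" "set_sum A K = UNIV"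
    using assms(1) unfolding relatively_dense_def by blast
  have "x \<in> set_sum B (set_sum C K)" for x
  proof -
    have "x \<in> set_sum A K" using K(2) by simp
    then obtain a k where a: "a \<in> A" and k: "k \<in> K" and x: "x = a + k"
      unfolding mem_set_sum by blast
    have "a \<in> set_sum B C" using a assms(2) by blast
    then obtain b c where b: "b \<in> B" and c: "c \<in> C" and "a = b + c"
      unfolding mem_set_sum by blast
    then have "x = b + (c + k)" using x by (simp add: add.assoc)
    then show ?thesis using set_sum_memI[OF b set_sum_memI[OF c k]] by simp
  qed
  then show ?thesis
    unfolding relatively_dense_def using compact_set_sum[OF assms(3) K(1)] by blast
qed

lemma relatively_dense_nonempty: "relatively_dense A \<Longrightarrow> A \<noteq> {}"
  by (auto simp: relatively_dense_def)

lemma mem_Lambda_K: "t \<in> Lambda_K L0 K \<longleftrightarrow> (\<forall>x\<in>K. x + t \<in> L0 \<longleftrightarrow> x \<in> L0)"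
  by (auto simp: Lambda_K_def set_eq_iff mem_translate)

lemma Lambda_K_antimono: "K' \<subseteq> K \<Longrightarrow> Lambda_K L0 K \<subseteq> Lambda_K L0 K'"
  by (auto simp only: mem_Lambda_K subset_iff)

lemma Lambda_K_insert_subset_diff:
  assumes "p \<in> L0"
  shows "Lambda_K L0 (insert p K) \<subseteq> set_diff_pts L0 L0"
    and "set_diff_pts (Lambda_K L0 (insert p K)) (Lambda_K L0 (insert p K)) \<subseteq> set_diff_pts L0 L0"
proof -
  have shifted: "p + t \<in> L0" if "t \<in> Lambda_K L0 (insert p K)" for t
    using that assms by (simp add: mem_Lambda_K)
  show "Lambda_K L0 (insert p K) \<subseteq> set_diff_pts L0 L0"
  proof
    fix t assume "t \<in> Lambda_K L0 (insert p K)"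
    then show "t \<in> set_diff_pts L0 L0"
      using set_diff_pts_memI[OF shifted assms] by simp
  qed
  show "set_diff_pts (Lambda_K L0 (insert p K)) (Lambda_K L0 (insert p K)) \<subseteq> set_diff_pts L0 L0"
  proof
    fix x assume "x \<in> set_diff_pts (Lambda_K L0 (insert p K)) (Lambda_K L0 (insert p K))"
    then obtain t s where "t \<in> Lambda_K L0 (insert p K)" "s \<in> Lambda_K L0 (insert p K)" "x = t - s"
      unfolding mem_set_diff_pts by blast
    then show "x \<in> set_diff_pts L0 L0"
      using set_diff_pts_memI[OF shifted shifted] by simp
  qed
qed

lemma zero_nhd_diff_add_subset:
  fixes S :: "'g::topological_ab_group_add set"
  assumes "open S" "0 \<in> S"
  obtains V where "open V" "0 \<in> V" "\<And>a b c. a \<in> V \<Longrightarrow> b \<in> V \<Longrightarrow> c \<in> V \<Longrightarrow> a - b + c \<in> S"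
proof -
  let ?f = "\<lambda>(a, b, c). a - b + c :: 'g"
  have "open (?f -` S)"
    using assms(1) by (intro open_vimage) (auto simp: case_prod_unfold intro!: continuous_intros)
  moreover have "(0, 0, 0) \<in> ?f -` S" using assms(2) by simp
  ultimately obtain A B where AB: "open A" "open B" "(0, 0, 0) \<in> A \<times> B" "A \<times> B \<subseteq> ?f -` S"
    by (rule open_prod_elim)
  have "(0, 0) \<in> B" using AB(3) by simp
  then obtain C D where CD: "open C" "open D" "(0, 0) \<in> C \<times> D" "C \<times> D \<subseteq> B"
    by (rule open_prod_elim[OF AB(2)])
  show ?thesis
  proof (rule that[of "A \<inter> C \<inter> D"])
    show "open (A \<inter> C \<inter> D)" using AB(1) CD(1,2) by (intro open_Int)
    show "0 \<in> A \<inter> C \<inter> D" using AB(3) CD(3) by simp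
    fix a b c assume "a \<in> A \<inter> C \<inter> D" "b \<in> A \<inter> C \<inter> D" "c \<in> A \<inter> C \<inter> D"
    then have "(a, b, c) \<in> A \<times> B" using CD(4) by blast
    then show "a - b + c \<in> S" using AB(4) by auto
  qed
qed

lemma zero_nhd_precompact:
  assumes "locally_compact_space (euclidean :: 'g::{zero, topological_space} topology)"
  obtains V C where "open V" "(0::'g) \<in> V" "compact C" "V \<subseteq> C"
proof -
  have "\<exists>V C. open V \<and> compact C \<and> (0::'g) \<in> V \<and> V \<subseteq> C"
    using assms unfolding locally_compact_space_def by simp
  then obtain V C where "open V" "compact C" "(0::'g) \<in> V" "V \<subseteq> C" by blast
  then show ?thesis by (intro that)
qed

lemma zero_nhd_precompact_diff_add_subset:
  fixes S :: "'g::topological_ab_group_add set"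
  assumes "locally_compact_space (euclidean :: 'g topology)" "open S" "0 \<in> S"
  obtains V C where "open V" "0 \<in> V" "compact C" "V \<subseteq> C"
    "\<And>a b c. a \<in> V \<Longrightarrow> b \<in> V \<Longrightarrow> c \<in> V \<Longrightarrow> a - b + c \<in> S"
proof -
  obtain V where V: "open V" "0 \<in> V" "\<And>a b c. a \<in> V \<Longrightarrow> b \<in> V \<Longrightarrow> c \<in> V \<Longrightarrow> a - b + c \<in> S"
    using zero_nhd_diff_add_subset[OF assms(2,3)] by blast
  obtain U C :: "'g set" where UC: "open U" "0 \<in> U" "compact C" "U \<subseteq> C"
    using zero_nhd_precompact[OF assms(1)] by blast
  show ?thesis
  proof (rule that[of "V \<inter> U" C])
    show "open (V \<inter> U)" using V(1) UC(1) by (rule open_Int)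
    show "0 \<in> V \<inter> U" using V(2) UC(2) by simp
    show "V \<inter> U \<subseteq> C" using UC(4) by blast
  qed (use UC(3) V(3) in simp_all)
qed

section \<open>Differences of a Meyer set\<close>

text \<open>Each translate \<open>A + h\<close> is \<open>W\<close>-separated, so it meets \<open>W\<close> in at most one point.\<close>
lemma uniformly_discrete_set_sum_finite_nhd:
  fixes A :: "'g::topological_ab_group_add set"
  assumes "uniformly_discrete A" "finite H"
  obtains W where "open W" "0 \<in> W" "finite (W \<inter> set_sum A H)"
proof -
  obtain V where V: "open V" "0 \<in> V" and sep: "\<forall>x\<in>A. \<forall>y\<in>A. y - x \<in> V \<longrightarrow> x = y"
    using assms(1) unfolding uniformly_discrete_def by blast
  obtain W where W: "open W" "0 \<in> W" and W_V: "\<And>a b c. a \<in> W \<Longrightarrow> b \<in> W \<Longrightarrow> c \<in> W \<Longrightarrow> a - b + c \<in> V"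
    using zero_nhd_diff_add_subset[OF V] by blast
  have fin: "finite (W \<inter> (\<lambda>a. a + h) ` A)" for h
  proof (cases "W \<inter> (\<lambda>a. a + h) ` A = {}")
    case False
    then obtain z where z: "z \<in> W \<inter> (\<lambda>a. a + h) ` A" by blast
    have "z' = z" if z': "z' \<in> W \<inter> (\<lambda>a. a + h) ` A" for z'
    proof -
      obtain a a' where a: "a \<in> A" "a' \<in> A" and "z = a + h" "z' = a' + h" using z z' by blast
      moreover have "z' - z + 0 \<in> V" using W_V z z' W(2) by blast
      ultimately have "a' - a \<in> V" by simp
      then have "a = a'" using sep a by blast
      then show "z' = z" using \<open>z = a + h\<close> \<open>z' = a' + h\<close> by simp
    qed
    then have "W \<inter> (\<lambda>a. a + h) ` A \<subseteq> {z}" by blast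
    then show ?thesis by (rule finite_subset) simp
  qed simp
  have "W \<inter> set_sum A H \<subseteq> (\<Union>h\<in>H. W \<inter> (\<lambda>a. a + h) ` A)"
    unfolding set_sum_def by blast
  then have "finite (W \<inter> set_sum A H)"
    using finite_UN_I[OF assms(2) fin] by (rule finite_subset)
  with W show ?thesis by (rule that)
qed

lemma uniformly_discrete_if_diff_locally_finite:
  fixes D :: "'g::{topological_ab_group_add, t1_space} set"
  assumes "open W" "0 \<in> W" "finite (W \<inter> E)" "set_diff_pts D D \<subseteq> E"
  shows "uniformly_discrete D"
proof -
  define V where "V = W - (W \<inter> E - {0})"
  have "open V" unfolding V_def using assms(1,3) by (intro open_Diff finite_imp_closed) auto
  moreover have "0 \<in> V" unfolding V_def using assms(2) by blast
  moreover have "x = y" if "x \<in> D" "y \<in> D" "y - x \<in> V" for x y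
  proof -
    have "y - x \<in> E" using assms(4) set_diff_pts_memI[OF that(2,1)] by blast
    then have "y - x = 0" using that(3) unfolding V_def by blast
    then show "x = y" by simp
  qed
  ultimately show ?thesis unfolding uniformly_discrete_def by blast
qed

lemma set_diff_diff_subset_set_sum:
  fixes A F :: "'g::ab_group_add set"
  assumes "set_diff_pts A A \<subseteq> set_sum A F"
  shows "set_diff_pts (set_diff_pts A A) (set_diff_pts A A) \<subseteq> set_sum A (set_sum F (set_diff_pts F F))"
proof
  have split: "\<exists>m\<in>A. \<exists>f\<in>F. a - b = m + f" if "a \<in> A" "b \<in> A" for a b
  proof -
    have "a - b \<in> set_sum A F" using assms set_diff_pts_memI[OF that] by blast
    then show ?thesis unfolding mem_set_sum .
  qed
  fix x assume "x \<in> set_diff_pts (set_diff_pts A A) (set_diff_pts A A)"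
  then obtain y z where "y \<in> set_diff_pts A A" "z \<in> set_diff_pts A A" "x = y - z"
    unfolding mem_set_diff_pts[of x] by blast
  then obtain a1 a2 a3 a4 where a: "a1 \<in> A" "a2 \<in> A" "a3 \<in> A" "a4 \<in> A" "x = (a1 - a2) - (a3 - a4)"
    unfolding mem_set_diff_pts by blast
  obtain m f where m: "m \<in> A" "f \<in> F" "a1 - a2 = m + f" using split a(1,2) by blast
  obtain m' f' where m': "m' \<in> A" "f' \<in> F" "a3 - a4 = m' + f'" using split a(3,4) by blast
  obtain n g where n: "n \<in> A" "g \<in> F" "m - m' = n + g" using split m(1) m'(1) by blast
  have "x = n + (g + (f - f'))" using a(5) m(3) m'(3) n(3) by (simp add: algebra_simps)
  moreover have "g + (f - f') \<in> set_sum F (set_diff_pts F F)"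
    using n(2) m(2) m'(2) by (intro set_sum_memI set_diff_pts_memI)
  ultimately show "x \<in> set_sum A (set_sum F (set_diff_pts F F))"
    unfolding mem_set_sum[of x] using n(1) by blast
qed

lemma meyer_set_diff_uniformly_discrete:
  fixes L0 :: "'g::{topological_ab_group_add, t1_space} set"
  assumes "meyer_set L0"
  shows "uniformly_discrete (set_diff_pts L0 L0)"
proof -
  obtain F where "finite F" and F: "set_diff_pts L0 L0 \<subseteq> set_sum L0 F"
    using assms unfolding meyer_set_def by blast
  have "uniformly_discrete L0" using assms unfolding meyer_set_def by blast
  moreover have "finite (set_sum F (set_diff_pts F F))"
    using \<open>finite F\<close> by (intro finite_set_sum finite_set_diff_pts)
  ultimately obtain W where "open W" "0 \<in> W" "finite (W \<inter> set_sum L0 (set_sum F (set_diff_pts F F)))"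
    by (rule uniformly_discrete_set_sum_finite_nhd)
  then show ?thesis
    using set_diff_diff_subset_set_sum[OF F] by (rule uniformly_discrete_if_diff_locally_finite)
qed

section \<open>The uniformity of the hull\<close>

lemma mem_hull_entourage:
  "(L, L') \<in> hull_entourage L0 K U \<longleftrightarrow> L \<in> hull_of L0 \<and> L' \<in> hull_of L0 \<and>
     (\<exists>t\<in>U. \<exists>t'\<in>U. translate t L \<inter> K = translate t' L' \<inter> K)"
  by (simp add: hull_entourage_def)

lemma translate_Int_eq_trans:
  fixes L L' L'' :: "'g::ab_group_add set"
  assumes "translate a L \<inter> K2 = translate b L' \<inter> K2"
    and "translate c L' \<inter> K2 = translate e L'' \<inter> K2"
    and "K1 \<subseteq> K2" "\<And>x. x \<in> K1 \<Longrightarrow> x + (c - b) \<in> K2"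
  shows "translate (a - b + c) L \<inter> K1 = translate e L'' \<inter> K1"
  unfolding translate_Int_eq_iff
proof
  fix x assume x: "x \<in> K1"
  have ab: "\<forall>y\<in>K2. y + a \<in> L \<longleftrightarrow> y + b \<in> L'" using assms(1) by (simp only: translate_Int_eq_iff)
  have ce: "\<forall>y\<in>K2. y + c \<in> L' \<longleftrightarrow> y + e \<in> L''" using assms(2) by (simp only: translate_Int_eq_iff)
  have "x + (a - b + c) \<in> L \<longleftrightarrow> (x + (c - b)) + a \<in> L" by (simp add: algebra_simps)
  also have "\<dots> \<longleftrightarrow> (x + (c - b)) + b \<in> L'" using ab assms(4)[OF x] by blast
  also have "\<dots> \<longleftrightarrow> x + c \<in> L'" by (simp add: algebra_simps)
  also have "\<dots> \<longleftrightarrow> x + e \<in> L''" using ce x assms(3) by blast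
  finally show "x + (a - b + c) \<in> L \<longleftrightarrow> x + e \<in> L''" .
qed

lemma hull_entourage_comp:
  fixes K1 U1 :: "'g::topological_ab_group_add set"
  assumes "locally_compact_space (euclidean :: 'g topology)" "compact K1" "open U1" "0 \<in> U1"
  obtains K2 U2 where "compact K2" "open U2" "0 \<in> U2"
    "hull_entourage L0 K2 U2 O hull_entourage L0 K2 U2 \<subseteq> hull_entourage L0 K1 U1"
proof -
  obtain V C where V: "open V" "0 \<in> V" "compact C" "V \<subseteq> C"
    and V_U1: "\<And>a b c. a \<in> V \<Longrightarrow> b \<in> V \<Longrightarrow> c \<in> V \<Longrightarrow> a - b + c \<in> U1"
    using zero_nhd_precompact_diff_add_subset[OF assms(1,3,4)] by blast
  define K2 where "K2 = set_sum K1 (set_diff_pts C C)"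
  have "compact K2"
    unfolding K2_def using assms(2) V(3) by (intro compact_set_sum compact_set_diff_pts)
  have shift_K2: "x + (c - b) \<in> K2" if "x \<in> K1" "c \<in> V" "b \<in> V" for x b c
  proof -
    have "c - b \<in> set_diff_pts C C" unfolding mem_set_diff_pts using that(2,3) V(4) by blast
    then show ?thesis unfolding K2_def mem_set_sum[of "x + (c - b)"] using that(1) by blast
  qed
  have "K1 \<subseteq> K2" using shift_K2[of _ 0 0] V(2) by auto
  show ?thesis
  proof (rule that[OF \<open>compact K2\<close> V(1,2)], rule subsetI)
    fix P assume "P \<in> hull_entourage L0 K2 V O hull_entourage L0 K2 V"
    then obtain L L' L'' where P: "P = (L, L'')"
      and "(L, L') \<in> hull_entourage L0 K2 V" "(L', L'') \<in> hull_entourage L0 K2 V"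
      by blast
    then obtain a b c e where hull: "L \<in> hull_of L0" "L'' \<in> hull_of L0"
      and abce: "a \<in> V" "b \<in> V" "c \<in> V" "e \<in> V"
      and ab: "translate a L \<inter> K2 = translate b L' \<inter> K2"
      and ce: "translate c L' \<inter> K2 = translate e L'' \<inter> K2"
      unfolding mem_hull_entourage by blast
    have "translate (a - b + c) L \<inter> K1 = translate e L'' \<inter> K1"
      using abce(2,3) by (intro translate_Int_eq_trans[OF ab ce \<open>K1 \<subseteq> K2\<close>] shift_K2)
    moreover have "a - b + c \<in> U1" "e \<in> U1"
      using V_U1[OF abce(1-3)] V_U1[OF abce(4) V(2) V(2)] by simp_all
    ultimately show "P \<in> hull_entourage L0 K1 U1"
      unfolding P mem_hull_entourage using hull by blast
  qed
qed

lemma hull_entourage_section_contains_hull_open: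
  fixes K U :: "'g::topological_ab_group_add set"
  assumes "locally_compact_space (euclidean :: 'g topology)" "compact K" "open U" "0 \<in> U"
    and "L \<in> hull_of L0"
  obtains W where "hull_open L0 W" "L \<in> W" "W \<subseteq> {L'. (L, L') \<in> hull_entourage L0 K U}"
proof -
  define S where "S = {L'. (L, L') \<in> hull_entourage L0 K U}"
  \<comment> \<open>the interior of \<open>S\<close>; it is open because every entourage contains the square of another\<close>
  define W where "W = {L1 \<in> hull_of L0. \<exists>K1 U1. compact K1 \<and> open U1 \<and> 0 \<in> U1 \<and>
       {L'. (L1, L') \<in> hull_entourage L0 K1 U1} \<subseteq> S}"
  have "hull_open L0 W"
    unfolding hull_open_def
  proof (intro conjI ballI)
    show "W \<subseteq> hull_of L0" unfolding W_def by blast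
    fix L1 assume "L1 \<in> W"
    then obtain K1 U1 where K1: "compact K1" "open U1" "0 \<in> U1"
      and sub_S: "{L'. (L1, L') \<in> hull_entourage L0 K1 U1} \<subseteq> S"
      unfolding W_def by blast
    obtain K2 U2 where K2: "compact K2" "open U2" "0 \<in> U2"
      and comp: "hull_entourage L0 K2 U2 O hull_entourage L0 K2 U2 \<subseteq> hull_entourage L0 K1 U1"
      using hull_entourage_comp[OF assms(1) K1] by blast
    have "{L'. (L1, L') \<in> hull_entourage L0 K2 U2} \<subseteq> W"
    proof
      fix L' assume L': "L' \<in> {L'. (L1, L') \<in> hull_entourage L0 K2 U2}"
      then have "L' \<in> hull_of L0" by (simp add: mem_hull_entourage)
      moreover have "{L''. (L', L'') \<in> hull_entourage L0 K2 U2} \<subseteq> S"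
        using L' comp sub_S by blast
      ultimately show "L' \<in> W" unfolding W_def using K2 by blast
    qed
    then show "\<exists>K U. compact K \<and> open U \<and> 0 \<in> U \<and> {L'. (L1, L') \<in> hull_entourage L0 K U} \<subseteq> W"
      using K2 by blast
  qed
  moreover have "L \<in> W" unfolding W_def S_def using assms(2-5) by blast
  moreover have "W \<subseteq> S"
  proof
    fix L1 assume "L1 \<in> W"
    then obtain K1 U1 where "0 \<in> U1" "{L'. (L1, L') \<in> hull_entourage L0 K1 U1} \<subseteq> S"
      and "L1 \<in> hull_of L0"
      unfolding W_def by blast
    moreover have "(L1, L1) \<in> hull_entourage L0 K1 U1"
      unfolding mem_hull_entourage using calculation by blast
    ultimately show "L1 \<in> S" by blast
  qed
  ultimately show ?thesis using that unfolding S_def by blast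
qed

section \<open>Metrics compatible with the hull topology\<close>

locale compatible_hull_metric = Metric_space "hull_of L0" d
  for L0 :: "'g::topological_ab_group_add set" and d +
  assumes openin_iff_hull_open: "openin mtopology W \<longleftrightarrow> hull_open L0 W"
begin

lemma set_diff_Lambda_K_nhd_subset_P_set:
  assumes "\<epsilon> > 0"
  obtains K U where "compact K" "open U" "0 \<in> U" "set_diff_pts (Lambda_K L0 K) U \<subseteq> P_set d L0 \<epsilon>"
proof -
  have "hull_open L0 (mball L0 \<epsilon>)" using openin_iff_hull_open openin_mball by blast
  moreover have "L0 \<in> mball L0 \<epsilon>" using self_in_hull_of[of L0] assms centre_in_mball_iff by blast
  ultimately obtain K U where KU: "compact K" "open U" "0 \<in> U"
    and near: "{L'. (L0, L') \<in> hull_entourage L0 K U} \<subseteq> mball L0 \<epsilon>"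
    unfolding hull_open_def by blast
  show ?thesis
  proof (rule that[OF KU], rule subsetI)
    fix x assume "x \<in> set_diff_pts (Lambda_K L0 K) U"
    then obtain t u where t: "t \<in> Lambda_K L0 K" and u: "u \<in> U" and x: "x = t - u"
      unfolding mem_set_diff_pts by blast
    have "translate 0 L0 \<inter> K = translate u (translate x L0) \<inter> K"
      using t unfolding Lambda_K_def x by (simp add: translate_translate)
    then have "(L0, translate x L0) \<in> hull_entourage L0 K U"
      unfolding mem_hull_entourage using self_in_hull_of translate_in_hull_of KU(3) u by blast
    then have "d L0 (translate x L0) < \<epsilon>" using near by auto
    then show "x \<in> P_set d L0 \<epsilon>" by (simp add: P_set_def commute)
  qed
qed

lemma P_set_subset_set_sum_Lambda_K:
  assumes "locally_compact_space (euclidean :: 'g topology)" "compact K0" "open W" "0 \<in> W"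
  obtains \<epsilon> where "\<epsilon> > 0" "P_set d L0 \<epsilon> \<subseteq> set_sum (Lambda_K L0 K0) W"
proof -
  obtain U C where U: "open U" "0 \<in> U" "compact C" "U \<subseteq> C"
    and U_W: "\<And>a b c. a \<in> U \<Longrightarrow> b \<in> U \<Longrightarrow> c \<in> U \<Longrightarrow> a - b + c \<in> W"
    using zero_nhd_precompact_diff_add_subset[OF assms(1,3,4)] by blast
  define K where "K = set_diff_pts K0 C"
  have "compact K" unfolding K_def using assms(2) U(3) by (rule compact_set_diff_pts)
  have shift_K: "x - a \<in> K" if "x \<in> K0" "a \<in> U" for x a
    unfolding K_def mem_set_diff_pts using that U(4) by blast
  obtain W' where "hull_open L0 W'" "L0 \<in> W'" and near: "W' \<subseteq> {L'. (L0, L') \<in> hull_entourage L0 K U}"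
    using hull_entourage_section_contains_hull_open[OF assms(1) \<open>compact K\<close> U(1,2) self_in_hull_of] .
  then have "openin mtopology W'" using openin_iff_hull_open by blast
  then obtain r where "r > 0" and ball: "mball L0 r \<subseteq> W'"
    using \<open>L0 \<in> W'\<close> unfolding openin_mtopology by blast
  have "t \<in> set_sum (Lambda_K L0 K0) W" if "t \<in> P_set d L0 r" for t
  proof -
    have "translate t L0 \<in> mball L0 r"
      using that self_in_hull_of[of L0] translate_in_hull_of[of t L0]
      by (simp add: P_set_def commute)
    then have "(L0, translate t L0) \<in> hull_entourage L0 K U" using ball near by blast
    then obtain a b where ab: "a \<in> U" "b \<in> U" and "translate a L0 \<inter> K = translate (t + b) L0 \<inter> K"
      unfolding mem_hull_entourage translate_translate by blast
    then have eq: "\<forall>y\<in>K. y + a \<in> L0 \<longleftrightarrow> y + (t + b) \<in> L0" by (simp only: translate_Int_eq_iff)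
    have "t + b - a \<in> Lambda_K L0 K0"
      unfolding mem_Lambda_K
    proof
      fix x assume x: "x \<in> K0"
      have "x + (t + b - a) \<in> L0 \<longleftrightarrow> (x - a) + (t + b) \<in> L0" by (simp add: algebra_simps)
      also have "\<dots> \<longleftrightarrow> (x - a) + a \<in> L0" using eq shift_K[OF x ab(1)] by blast
      finally show "x + (t + b - a) \<in> L0 \<longleftrightarrow> x \<in> L0" by simp
    qed
    moreover have "a - b \<in> W" using U_W[OF ab U(2)] by simp
    moreover have "t = (t + b - a) + (a - b)" by simp
    ultimately show ?thesis unfolding mem_set_sum[of t] by blast
  qed
  then show ?thesis using that \<open>r > 0\<close> by blast
qed

lemma relatively_dense_P_set_if_Lambda_K:
  assumes "\<forall>K. compact K \<longrightarrow> relatively_dense (Lambda_K L0 K)"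
  shows "\<forall>\<epsilon>>0. relatively_dense (P_set d L0 \<epsilon>)"
proof (intro allI impI)
  fix \<epsilon> :: real assume "\<epsilon> > 0"
  obtain K U where "compact K" "open U" "0 \<in> U"
    and sub: "set_diff_pts (Lambda_K L0 K) U \<subseteq> P_set d L0 \<epsilon>"
    using set_diff_Lambda_K_nhd_subset_P_set[OF \<open>\<epsilon> > 0\<close>] by blast
  have "relatively_dense (Lambda_K L0 K)" using assms \<open>compact K\<close> by blast
  moreover have "Lambda_K L0 K \<subseteq> P_set d L0 \<epsilon>"
    using subset_set_diff_pts_zero[OF \<open>0 \<in> U\<close>] sub by (rule order_trans)
  ultimately show "relatively_dense (P_set d L0 \<epsilon>)" by (rule relatively_dense_mono)
qed

lemma P_set_diff_subset_if_Lambda_K_diff: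
  assumes "locally_compact_space (euclidean :: 'g topology)"
    and "\<forall>K. compact K \<longrightarrow>
      (\<exists>K'. compact K' \<and> set_diff_pts (Lambda_K L0 K') (Lambda_K L0 K') \<subseteq> Lambda_K L0 K)"
  shows "\<forall>\<epsilon>>0. \<exists>\<delta>>0. set_diff_pts (P_set d L0 \<delta>) (P_set d L0 \<delta>) \<subseteq> P_set d L0 \<epsilon>"
proof (intro allI impI)
  fix \<epsilon> :: real assume "\<epsilon> > 0"
  obtain K U where "compact K" "open U" "0 \<in> U"
    and Lambda_U: "set_diff_pts (Lambda_K L0 K) U \<subseteq> P_set d L0 \<epsilon>"
    using set_diff_Lambda_K_nhd_subset_P_set[OF \<open>\<epsilon> > 0\<close>] by blast
  obtain K' where "compact K'" and K'_K: "set_diff_pts (Lambda_K L0 K') (Lambda_K L0 K') \<subseteq> Lambda_K L0 K"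
    using assms(2) \<open>compact K\<close> by blast
  obtain W where "open W" "0 \<in> W"
    and W_U: "\<And>a b c. a \<in> W \<Longrightarrow> b \<in> W \<Longrightarrow> c \<in> W \<Longrightarrow> a - b + c \<in> U"
    using zero_nhd_diff_add_subset[OF \<open>open U\<close> \<open>0 \<in> U\<close>] by blast
  obtain \<delta> where "\<delta> > 0" and P_W: "P_set d L0 \<delta> \<subseteq> set_sum (Lambda_K L0 K') W"
    using P_set_subset_set_sum_Lambda_K[OF assms(1) \<open>compact K'\<close> \<open>open W\<close> \<open>0 \<in> W\<close>] by blast
  have "x \<in> P_set d L0 \<epsilon>" if x_diff: "x \<in> set_diff_pts (P_set d L0 \<delta>) (P_set d L0 \<delta>)" for x
  proof -
    obtain t s where "t \<in> P_set d L0 \<delta>" "s \<in> P_set d L0 \<delta>" and x: "x = t - s"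
      using x_diff unfolding mem_set_diff_pts by blast
    then have "t \<in> set_sum (Lambda_K L0 K') W" "s \<in> set_sum (Lambda_K L0 K') W"
      using P_W by blast+
    then obtain a w b w' where ab: "a \<in> Lambda_K L0 K'" "b \<in> Lambda_K L0 K'"
      and w: "w \<in> W" "w' \<in> W" and "t = a + w" "s = b + w'"
      unfolding mem_set_sum by blast
    then have "x = (a - b) - (w' - w + 0)" using x by simp
    moreover have "a - b \<in> Lambda_K L0 K" using K'_K set_diff_pts_memI[OF ab] by blast
    moreover have "w' - w + 0 \<in> U" using W_U w \<open>0 \<in> W\<close> by blast
    ultimately have "x \<in> set_diff_pts (Lambda_K L0 K) U" unfolding mem_set_diff_pts by blast
    then show ?thesis using Lambda_U by blast
  qed
  then show "\<exists>\<delta>>0. set_diff_pts (P_set d L0 \<delta>) (P_set d L0 \<delta>) \<subseteq> P_set d L0 \<epsilon>"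
    using \<open>\<delta> > 0\<close> by blast
qed

lemma relatively_dense_Lambda_K_if_P_set:
  assumes "locally_compact_space (euclidean :: 'g topology)"
    and "\<forall>\<epsilon>>0. relatively_dense (P_set d L0 \<epsilon>)"
  shows "\<forall>K. compact K \<longrightarrow> relatively_dense (Lambda_K L0 K)"
proof (intro allI impI)
  fix K :: "'g set" assume "compact K"
  obtain W C :: "'g set" where "open W" "0 \<in> W" "compact C" "W \<subseteq> C"
    using zero_nhd_precompact[OF assms(1)] by blast
  obtain \<epsilon> where "\<epsilon> > 0" and P_W: "P_set d L0 \<epsilon> \<subseteq> set_sum (Lambda_K L0 K) W"
    using P_set_subset_set_sum_Lambda_K[OF assms(1) \<open>compact K\<close> \<open>open W\<close> \<open>0 \<in> W\<close>] by blast
  have "relatively_dense (P_set d L0 \<epsilon>)" using assms(2) \<open>\<epsilon> > 0\<close> by blast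
  moreover have "P_set d L0 \<epsilon> \<subseteq> set_sum (Lambda_K L0 K) C"
    using P_W set_sum_mono[OF order_refl \<open>W \<subseteq> C\<close>] by (rule order_trans)
  ultimately show "relatively_dense (Lambda_K L0 K)"
    using \<open>compact C\<close> by (rule relatively_dense_if_subset_set_sum)
qed

lemma Lambda_K_diff_subset_if_P_set_diff:
  assumes "locally_compact_space (euclidean :: 'g topology)"
    and "L0 \<noteq> {}" "uniformly_discrete (set_diff_pts L0 L0)"
    and "\<forall>\<epsilon>>0. \<exists>\<delta>>0. set_diff_pts (P_set d L0 \<delta>) (P_set d L0 \<delta>) \<subseteq> P_set d L0 \<epsilon>"
  shows "\<forall>K. compact K \<longrightarrow>
      (\<exists>K'. compact K' \<and> set_diff_pts (Lambda_K L0 K') (Lambda_K L0 K') \<subseteq> Lambda_K L0 K)"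
proof (intro allI impI)
  fix K :: "'g set" assume "compact K"
  obtain p where "p \<in> L0" using assms(2) by blast
  obtain V where "open V" "0 \<in> V"
    and sep: "\<forall>x\<in>set_diff_pts L0 L0. \<forall>y\<in>set_diff_pts L0 L0. y - x \<in> V \<longrightarrow> x = y"
    using assms(3) unfolding uniformly_discrete_def by blast
  have "compact (insert p K)" using \<open>compact K\<close> by simp
  obtain \<epsilon> where "\<epsilon> > 0" and P_V: "P_set d L0 \<epsilon> \<subseteq> set_sum (Lambda_K L0 (insert p K)) V"
    using P_set_subset_set_sum_Lambda_K[OF assms(1) \<open>compact (insert p K)\<close> \<open>open V\<close> \<open>0 \<in> V\<close>]
    by blast
  obtain \<delta> where "\<delta> > 0" and P_diff: "set_diff_pts (P_set d L0 \<delta>) (P_set d L0 \<delta>) \<subseteq> P_set d L0 \<epsilon>"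
    using assms(4) \<open>\<epsilon> > 0\<close> by blast
  obtain K2 U2 where "compact K2" "open U2" "0 \<in> U2"
    and sub: "set_diff_pts (Lambda_K L0 K2) U2 \<subseteq> P_set d L0 \<delta>"
    using set_diff_Lambda_K_nhd_subset_P_set[OF \<open>\<delta> > 0\<close>] by blast
  have "Lambda_K L0 K2 \<subseteq> P_set d L0 \<delta>"
    using subset_set_diff_pts_zero[OF \<open>0 \<in> U2\<close>] sub by (rule order_trans)
  with Lambda_K_antimono[OF subset_insertI]
  have Lambda_P: "Lambda_K L0 (insert p K2) \<subseteq> P_set d L0 \<delta>" by (rule order_trans)
  have "x \<in> Lambda_K L0 K"
    if x: "x \<in> set_diff_pts (Lambda_K L0 (insert p K2)) (Lambda_K L0 (insert p K2))" for x
  proof -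
    have "x \<in> P_set d L0 \<epsilon>" using x set_diff_pts_mono[OF Lambda_P Lambda_P] P_diff by blast
    then have "x \<in> set_sum (Lambda_K L0 (insert p K)) V" using P_V by blast
    then obtain y w where y: "y \<in> Lambda_K L0 (insert p K)" and "w \<in> V" "x = y + w"
      unfolding mem_set_sum by blast
    have "y \<in> set_diff_pts L0 L0"
      using y Lambda_K_insert_subset_diff(1)[OF \<open>p \<in> L0\<close>] by blast
    moreover have "x \<in> set_diff_pts L0 L0"
      using x Lambda_K_insert_subset_diff(2)[OF \<open>p \<in> L0\<close>] by blast
    moreover have "x - y \<in> V" using \<open>w \<in> V\<close> \<open>x = y + w\<close> by simp
    ultimately have "y = x" by (rule sep[rule_format])
    then show ?thesis using y Lambda_K_antimono[OF subset_insertI] by blast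
  qed
  moreover have "compact (insert p K2)" using \<open>compact K2\<close> by simp
  ultimately show "\<exists>K'. compact K' \<and> set_diff_pts (Lambda_K L0 K') (Lambda_K L0 K') \<subseteq> Lambda_K L0 K"
    by blast
qed

end

theorem proposition4p2:
  fixes L0 :: "'g::{topological_ab_group_add, t2_space, second_countable_topology} set"
    and d :: "'g set \<Rightarrow> 'g set \<Rightarrow> real"
  assumes "locally_compact_space (euclidean :: 'g topology)"
    and "sigma_compact_group TYPE('g)"
    and "meyer_set L0"
    and "Metric_space (hull_of L0) d"
    and "\<forall>W. openin (Metric_space.mtopology (hull_of L0) d) W \<longleftrightarrow> hull_open L0 W"
  shows "((\<forall>K. compact K \<longrightarrow> relatively_dense (Lambda_K L0 K)) \<and>
          (\<forall>K. compact K \<longrightarrow> (\<exists>K'. compact K' \<and>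
              set_diff_pts (Lambda_K L0 K') (Lambda_K L0 K') \<subseteq> Lambda_K L0 K)))
     \<longleftrightarrow>
         ((\<forall>\<epsilon>>0. relatively_dense (P_set d L0 \<epsilon>)) \<and>
          (\<forall>\<epsilon>>0. \<exists>\<delta>>0. set_diff_pts (P_set d L0 \<delta>) (P_set d L0 \<delta>) \<subseteq> P_set d L0 \<epsilon>))"
proof -
  interpret compatible_hull_metric L0 d
    using assms(4,5) by (intro compatible_hull_metric.intro compatible_hull_metric_axioms.intro) blast+
  have "L0 \<noteq> {}"
    using assms(3) relatively_dense_nonempty unfolding meyer_set_def by blast
  note Lambda_K_diff = Lambda_K_diff_subset_if_P_set_diff[OF assms(1) this meyer_set_diff_uniformly_discrete[OF assms(3)]]
  show ?thesis (is "?Lambda_K_cond \<longleftrightarrow> ?P_set_cond")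
  proof
    assume L: ?Lambda_K_cond
    show ?P_set_cond
      using relatively_dense_P_set_if_Lambda_K[OF conjunct1[OF L]] P_set_diff_subset_if_Lambda_K_diff[OF assms(1) conjunct2[OF L]]
      by (rule conjI)
  next
    assume P: ?P_set_cond
    show ?Lambda_K_cond
      using relatively_dense_Lambda_K_if_P_set[OF assms(1) conjunct1[OF P]] Lambda_K_diff[OF conjunct2[OF P]]
      by (rule conjI)
  qed
qed

end
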